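(* Let $n \equiv 1 \pmod 6$ be a prime and let $\alpha$ be a primitive element of $\mathbb{F}_{2^n}$ (identified with $\mathbb{F}_2^n$). If there exist $\frac{2^n-2}{42n}$ pairwise disjoint coset complete $3$-dimensional subspaces of $\mathbb{F}_2^n$, then there exists a Steiner structure $\mathbb{S}_2[2,3,n]$.
   Context: For $s \in \mathbb{Z}_{2^n-1}$, the cyclotomic coset of $s$ is $C_s = \{ s\cdot 2^i \bmod (2^n-1) : 0\le i\le n-1\}$ and $C(s)$ denotes its smallest element (the coset representative). For a $3$-dimensional $\mathbb{F}_2$-subspace $X = \{0,\alpha^{i_1},\ldots,\alpha^{i_7}\}$ with $i_1,\ldots,i_7 \in\{0,\ldots,2^n-2\}$ distinct, its coset difference set is $C(\Delta(X)) = \{ C(i_r - i_s \bmod (2^n-1)) : 1\le r,s\le 7,\ r\ne s\}$. $X$ is coset complete if $|C(\Delta(X))| = 42$; two coset complete subspaces $X,Y$ are disjoint coset complete if $C(\Delta(X))\cap C(\Delta(Y)) = \varnothing$. A Steiner structure $\mathbb{S}_q[t,k,n]$ is a set $\mathbb{S}$ of $k$-dimensional subspaces of $\mathbb{F}_q^n$ such that every $t$-dimensional subspace of $\mathbb{F}_q^n$ is contained in exactly one element of $\mathbb{S}$. *)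

theory Defs
  imports "HOL-Computational_Algebra.Primes"
begin

text \<open>F_2-subspaces of a field of characteristic 2 (the field F_{2^n}, identified with F_2^n):
  an F_2-subspace is a set containing 0 and closed under addition; an F_2-subspace
  has dimension k iff it has exactly 2^k elements.\<close>
definition f2_subspace :: "'a::field set \<Rightarrow> bool" where
  "f2_subspace V \<longleftrightarrow> 0 \<in> V \<and> (\<forall>x\<in>V. \<forall>y\<in>V. x + y \<in> V)"

definition f2_dim_subspace :: "nat \<Rightarrow> 'a::field set \<Rightarrow> bool" where
  "f2_dim_subspace k V \<longleftrightarrow> f2_subspace V \<and> finite V \<and> card V = 2 ^ k"

definition primitive_elem :: "'a::field \<Rightarrow> bool" where
  "primitive_elem \<alpha> \<longleftrightarrow> (\<forall>x. x \<noteq> 0 \<longrightarrow> (\<exists>i::nat. x = \<alpha> ^ i))"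

definition cyc_coset :: "nat \<Rightarrow> nat \<Rightarrow> nat set" where
  "cyc_coset n s = {(s * 2 ^ i) mod (2 ^ n - 1) | i. i \<le> n - 1}"

definition coset_rep :: "nat \<Rightarrow> nat \<Rightarrow> nat" where
  "coset_rep n s = Min (cyc_coset n s)"

definition exps :: "'a::field \<Rightarrow> nat \<Rightarrow> 'a set \<Rightarrow> nat set" where
  "exps \<alpha> n X = {i. i \<le> 2 ^ n - 2 \<and> \<alpha> ^ i \<in> X}"

definition coset_diff_set :: "'a::field \<Rightarrow> nat \<Rightarrow> 'a set \<Rightarrow> nat set" where
  "coset_diff_set \<alpha> n X =
     {coset_rep n (nat ((int r - int s) mod (2 ^ n - 1))) | r s.
        r \<in> exps \<alpha> n X \<and> s \<in> exps \<alpha> n X \<and> r \<noteq> s}"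

definition coset_complete :: "'a::field \<Rightarrow> nat \<Rightarrow> 'a set \<Rightarrow> bool" where
  "coset_complete \<alpha> n X \<longleftrightarrow> card (coset_diff_set \<alpha> n X) = 42"

definition disjoint_coset_complete :: "'a::field \<Rightarrow> nat \<Rightarrow> 'a set \<Rightarrow> 'a set \<Rightarrow> bool" where
  "disjoint_coset_complete \<alpha> n X Y \<longleftrightarrow>
     coset_complete \<alpha> n X \<and> coset_complete \<alpha> n Y \<and>
     coset_diff_set \<alpha> n X \<inter> coset_diff_set \<alpha> n Y = {}"

text \<open>Steiner structure S_2[t,k,n] in the ambient space (the whole field 'a, of order 2^n).\<close>
definition steiner_structure :: "nat \<Rightarrow> nat \<Rightarrow> 'a::field set set \<Rightarrow> bool" where
  "steiner_structure t k S \<longleftrightarrow>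
     (\<forall>X\<in>S. f2_dim_subspace k X) \<and>
     (\<forall>T. f2_dim_subspace t T \<longrightarrow> (\<exists>!X. X \<in> S \<and> T \<subseteq> X))"

end

theory Submission
  imports Defs "HOL-Number_Theory.Cong"
begin

text \<open>A 2-subspace is \<open>{0, a, b, a + b}\<close>, so a Steiner structure \<open>S\<^sub>2[2,3,n]\<close> is a family of
  3-subspaces in which every pair of distinct nonzero elements \<open>a, b\<close> lies in exactly one member.
  Take as blocks the sets \<open>c \<cdot> X\<^bsup>2^k\<^esup>\<close> with \<open>X\<close> in the given family, \<open>c \<noteq> 0\<close> and \<open>k < n\<close>.
  Such a block contains \<open>a\<close> and \<open>b\<close> iff \<open>b / a = (y / x)\<^bsup>2^k\<^esup>\<close> for distinct nonzero \<open>x, y \<in> X\<close>,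
  i.e. iff \<open>log\<^sub>\<alpha> (b / a)\<close> lies in the cyclotomic coset of \<open>log\<^sub>\<alpha> (y / x)\<close>. As \<open>n\<close> is prime,
  the coset of every nonzero residue has exactly \<open>n\<close> elements; the 42 coset representatives of
  each \<open>X\<close> are distinct and those of different members are disjoint, so by counting their cosets
  partition \<open>{1, \<dots>, 2\<^sup>n - 2}\<close>. Hence \<open>b / a\<close> determines \<open>X\<close>, the pair \<open>(x, y)\<close> and \<open>k\<close>, and
  then \<open>c = a / x\<^bsup>2^k\<^esup>\<close>.\<close>

section \<open>Cyclotomic cosets modulo \<open>2\<^sup>n - 1\<close>\<close>

lemma gcd_pow2_minus_one_add:
  "gcd (2 ^ (a + b) - 1) (2 ^ b - 1) = gcd (2 ^ a - 1) (2 ^ b - 1 :: nat)"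
proof -
  have "(2::nat) ^ (a + b) - 1 = 2 ^ a * (2 ^ b - 1) + (2 ^ a - 1)"
    by (simp add: power_add diff_mult_distrib2)
  then have "gcd (2 ^ (a + b) - 1) (2 ^ b - 1) = gcd (2 ^ b - 1) (2 ^ a * (2 ^ b - 1) + (2 ^ a - 1 :: nat))"
    by (simp only: gcd.commute)
  also have "\<dots> = gcd (2 ^ b - 1) (2 ^ a - 1)"
    by (rule gcd_add_mult)
  finally show ?thesis
    by (simp only: gcd.commute)
qed

lemma gcd_pow2_minus_one: "gcd (2 ^ a - 1) (2 ^ b - 1 :: nat) = 2 ^ gcd a b - 1"
proof (induction "a + b" arbitrary: a b rule: less_induct)
  case less
  consider "a = 0 \<or> b = 0" | "0 < b" "b \<le> a" | "0 < a" "a < b"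
    by linarith
  then show ?case
  proof cases
    case 2
    have "gcd (2 ^ a - 1) (2 ^ b - 1 :: nat) = gcd (2 ^ (a - b) - 1) (2 ^ b - 1)"
      using gcd_pow2_minus_one_add[of "a - b" b] 2 by simp
    also have "\<dots> = 2 ^ gcd (a - b) b - 1"
      using 2 less.hyps[of "a - b" b] by simp
    finally show ?thesis
      using 2 by (simp add: gcd_diff1_nat)
  next
    case 3
    have "gcd (2 ^ b - 1) (2 ^ a - 1 :: nat) = gcd (2 ^ (b - a) - 1) (2 ^ a - 1)"
      using gcd_pow2_minus_one_add[of "b - a" a] 3 by simp
    also have "\<dots> = 2 ^ gcd (b - a) a - 1"
      using 3 less.hyps[of "b - a" a] by simp
    finally show ?thesis
      using 3 by (metis gcd.commute gcd_diff1_nat less_or_eq_imp_le)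
  qed auto
qed

lemma coprime_mersenne_pow2:
  assumes "0 < n" shows "coprime (2 ^ n - 1) (2 ^ k :: nat)"
  using assms by (simp add: coprime_power_right_iff odd_pos)

lemma pow2_cong_mod_exponent: "[2 ^ k = 2 ^ (k mod n)] (mod 2 ^ n - 1 :: nat)"
proof -
  have "[(2::nat) ^ n - 1 + 1 = 0 + 1] (mod 2 ^ n - 1)"
    by (intro cong_add) (simp_all add: cong_def)
  then have "[(2::nat) ^ n = 1] (mod 2 ^ n - 1)"
    by simp
  then have "[((2::nat) ^ n) ^ (k div n) * 2 ^ (k mod n) = 1 ^ (k div n) * 2 ^ (k mod n)] (mod 2 ^ n - 1)"
    by (intro cong_mult cong_pow) auto
  moreover have "((2::nat) ^ n) ^ (k div n) * 2 ^ (k mod n) = 2 ^ k"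
    by (simp only: power_mult [symmetric] power_add [symmetric] mult_div_mod_eq)
  ultimately show ?thesis
    by simp
qed

lemma cyc_coset_eq_range:
  assumes "0 < n"
  shows "cyc_coset n t = range (\<lambda>i. t * 2 ^ i mod (2 ^ n - 1))"
proof (intro antisym subsetI)
  fix x assume "x \<in> range (\<lambda>i. t * 2 ^ i mod (2 ^ n - 1))"
  then obtain i where "x = t * 2 ^ i mod (2 ^ n - 1)"
    by blast
  also have "\<dots> = t * 2 ^ (i mod n) mod (2 ^ n - 1)"
    using cong_scalar_left[OF pow2_cong_mod_exponent] by (simp add: cong_def)
  moreover have "i mod n \<le> n - 1"
    using assms by (simp add: less_Suc_eq_le [symmetric])
  ultimately show "x \<in> cyc_coset n t"
    unfolding cyc_coset_def by blast
qed (auto simp: cyc_coset_def)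

lemma cyc_coset_cong:
  assumes "[s = t] (mod 2 ^ n - 1)"
  shows "cyc_coset n s = cyc_coset n t"
  using cong_scalar_right[OF assms] unfolding cyc_coset_def cong_def by presburger

lemma cyc_coset_mult_pow2:
  assumes "0 < n"
  shows "cyc_coset n (t * 2 ^ k) = cyc_coset n t"
proof (intro antisym subsetI)
  fix x assume "x \<in> cyc_coset n (t * 2 ^ k)"
  then obtain i where "x = t * 2 ^ k * 2 ^ i mod (2 ^ n - 1)"
    unfolding cyc_coset_eq_range[OF assms] by blast
  then have "x = t * 2 ^ (k + i) mod (2 ^ n - 1)"
    by (simp add: power_add mult.assoc)
  then show "x \<in> cyc_coset n t"
    unfolding cyc_coset_eq_range[OF assms] by blast
next
  fix x assume "x \<in> cyc_coset n t"
  then obtain i where x: "x = t * 2 ^ i mod (2 ^ n - 1)"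
    unfolding cyc_coset_eq_range[OF assms] by blast
  have "(i + n * k) mod n = i mod n"
    by simp
  then have "[(2::nat) ^ (i + n * k) = 2 ^ i] (mod 2 ^ n - 1)"
    using pow2_cong_mod_exponent[of i n] pow2_cong_mod_exponent[of "i + n * k" n]
    by (metis cong_sym cong_trans)
  moreover have "i + n * k = k + (i + (n - 1) * k)"
    using assms by (cases n) auto
  ultimately have "[t * 2 ^ k * 2 ^ (i + (n - 1) * k) = t * 2 ^ i] (mod 2 ^ n - 1)"
    by (metis cong_scalar_left mult.assoc power_add)
  then have "x = t * 2 ^ k * 2 ^ (i + (n - 1) * k) mod (2 ^ n - 1)"
    using x by (simp add: cong_def)
  then show "x \<in> cyc_coset n (t * 2 ^ k)"
    unfolding cyc_coset_eq_range[OF assms] by blast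
qed

lemma cyc_coset_eq_if_mem:
  assumes "0 < n" and "x \<in> cyc_coset n t"
  shows "cyc_coset n x = cyc_coset n t"
proof -
  obtain i where "x = t * 2 ^ i mod (2 ^ n - 1)"
    using assms unfolding cyc_coset_eq_range[OF assms(1)] by blast
  then have "cyc_coset n x = cyc_coset n (t * 2 ^ i)"
    by (intro cyc_coset_cong) (simp add: cong_def)
  then show ?thesis
    using cyc_coset_mult_pow2[OF assms(1)] by simp
qed

lemma coset_rep_mem: "coset_rep n t \<in> cyc_coset n t"
proof -
  have "t mod (2 ^ n - 1) \<in> cyc_coset n t"
    unfolding cyc_coset_def by force
  then show ?thesis
    unfolding coset_rep_def cyc_coset_def by (intro Min_in) auto
qed

lemma cyc_coset_coset_rep:
  "0 < n \<Longrightarrow> cyc_coset n (coset_rep n t) = cyc_coset n t"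
  by (rule cyc_coset_eq_if_mem[OF _ coset_rep_mem])

lemma coset_rep_eq_iff:
  "0 < n \<Longrightarrow> coset_rep n s = coset_rep n t \<longleftrightarrow> cyc_coset n s = cyc_coset n t"
  by (metis coset_rep_def cyc_coset_coset_rep)

lemma coset_rep_coset_rep:
  "0 < n \<Longrightarrow> coset_rep n (coset_rep n t) = coset_rep n t"
  by (simp add: coset_rep_eq_iff cyc_coset_coset_rep)

lemma coprime_mersenne_mersenne:
  assumes "prime n" and "0 < m" and "m < n"
  shows "coprime (2 ^ n - 1) (2 ^ m - 1 :: nat)"
proof -
  have "\<not> n dvd m"
    using assms(2,3) by (auto dest: dvd_imp_le)
  then have "coprime n m"
    using assms(1) prime_imp_coprime by blast
  then show ?thesis
    using gcd_pow2_minus_one[of n m] by (simp add: coprime_iff_gcd_eq_1)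
qed

lemma mult_pow2_cong_imp_eq:
  fixes t :: nat
  assumes "prime n" and "\<not> (2 ^ n - 1) dvd t"
    and "k1 < n" and "k2 < n" and "[t * 2 ^ k1 = t * 2 ^ k2] (mod 2 ^ n - 1)"
  shows "k1 = k2"
  using assms(3-5)
proof (induction k1 k2 rule: linorder_wlog)
  case (le k1 k2)
  show ?case
  proof (rule ccontr)
    assume "k1 \<noteq> k2"
    define m where "m = k2 - k1"
    have m: "0 < m" "m < n"
      using le \<open>k1 \<noteq> k2\<close> by (auto simp: m_def)
    have "[t * 2 ^ k1 * 2 ^ m = t * 2 ^ k1] (mod 2 ^ n - 1)"
      using le(4) le(1) by (simp add: m_def mult.assoc power_add [symmetric] cong_sym)
    then have "(2 ^ n - 1) dvd t * 2 ^ k1 * 2 ^ m - t * 2 ^ k1"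
      by (simp add: cong_altdef_nat)
    also have "t * 2 ^ k1 * 2 ^ m - t * 2 ^ k1 = t * (2 ^ m - 1) * 2 ^ k1"
      by (simp add: diff_mult_distrib2 mult_ac)
    finally have "(2 ^ n - 1) dvd t"
      using coprime_mersenne_pow2[of n k1] coprime_mersenne_mersenne[OF assms(1) m]
        prime_gt_0_nat[OF assms(1)]
      by (simp add: coprime_dvd_mult_left_iff)
    with assms(2) show False ..
  qed
qed (simp add: cong_sym)

lemma card_cyc_coset:
  assumes "prime n" and "\<not> (2 ^ n - 1) dvd t"
  shows "card (cyc_coset n t) = n"
proof -
  have "cyc_coset n t = (\<lambda>i. t * 2 ^ i mod (2 ^ n - 1)) ` {..<n}"
    using prime_gt_0_nat[OF assms(1)] unfolding cyc_coset_def by (auto simp: less_Suc_eq_le [symmetric])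
  moreover have "inj_on (\<lambda>i. t * 2 ^ i mod (2 ^ n - 1)) {..<n}"
    using mult_pow2_cong_imp_eq[OF assms] by (auto intro!: inj_onI simp: cong_def)
  ultimately show ?thesis
    by (simp add: card_image)
qed

lemma cyc_coset_subset_units:
  assumes "0 < n" and "\<not> (2 ^ n - 1) dvd t"
  shows "cyc_coset n t \<subseteq> {1..<2 ^ n - 1}"
proof
  fix x assume "x \<in> cyc_coset n t"
  then obtain i where x: "x = t * 2 ^ i mod (2 ^ n - 1)"
    unfolding cyc_coset_eq_range[OF assms(1)] by blast
  have "\<not> (2 ^ n - 1) dvd t * 2 ^ i"
    using assms coprime_mersenne_pow2[OF assms(1)] by (simp add: coprime_dvd_mult_left_iff)
  moreover have "(0::nat) < 2 ^ n - 1"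
    using one_less_power[of "2::nat" n] assms(1) by simp
  ultimately show "x \<in> {1..<2 ^ n - 1}"
    using x by (auto simp: dvd_eq_mod_eq_0)
qed

lemma card_UN_cyc_coset:
  assumes "prime n" and "finite R"
    and reps: "\<And>c. c \<in> R \<Longrightarrow> coset_rep n c = c \<and> \<not> (2 ^ n - 1) dvd c"
  shows "card (\<Union>c\<in>R. cyc_coset n c) = n * card R"
proof -
  have n: "0 < n"
    using assms(1) by (rule prime_gt_0_nat)
  have "cyc_coset n c1 \<inter> cyc_coset n c2 = {}" if "c1 \<in> R" "c2 \<in> R" "c1 \<noteq> c2" for c1 c2
  proof (rule ccontr)
    assume "cyc_coset n c1 \<inter> cyc_coset n c2 \<noteq> {}"
    then obtain x where "x \<in> cyc_coset n c1" "x \<in> cyc_coset n c2"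
      by blast
    then have "coset_rep n c1 = coset_rep n c2"
      using cyc_coset_eq_if_mem[OF n] coset_rep_eq_iff[OF n] by metis
    with that reps show False
      by metis
  qed
  then have "card (\<Union>c\<in>R. cyc_coset n c) = (\<Sum>c\<in>R. card (cyc_coset n c))"
    using assms(2) by (intro card_UN_disjoint) (auto simp: cyc_coset_def)
  also have "\<dots> = (\<Sum>c\<in>R. n)"
    using card_cyc_coset[OF assms(1)] reps by simp
  finally show ?thesis
    by simp
qed


section \<open>Finite fields of order \<open>2\<^sup>n\<close> with a primitive element\<close>

definition distinct_pairs :: "'a set \<Rightarrow> ('a \<times> 'a) set" where
  "distinct_pairs A = {(x, y). x \<in> A \<and> y \<in> A \<and> x \<noteq> y}"

lemma card_distinct_pairs:
  assumes "finite A"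
  shows "card (distinct_pairs A) = card A * (card A - 1)"
proof -
  have "distinct_pairs A = Sigma A (\<lambda>x. A - {x})"
    unfolding distinct_pairs_def by auto
  then show ?thesis
    using assms by (simp add: card_SigmaI card_Diff_singleton)
qed

lemma f2_dim_subspace_image:
  assumes "f2_dim_subspace m X" and "inj_on f X" and "f 0 = 0"
    and additive: "\<And>x y. f (x + y) = f x + f y"
  shows "f2_dim_subspace m (f ` X)"
  using assms unfolding f2_dim_subspace_def f2_subspace_def
  by (auto simp: card_image simp flip: additive)

lemma f2_dim_subspace_2_eq:
  assumes "f2_dim_subspace 2 T"
  obtains a b where "a \<noteq> 0" "b \<noteq> 0" "a \<noteq> b" "T = {0, a, b, a + b}"
proof -
  have T: "finite T" "card T = 4" "0 \<in> T" "\<And>x y. x \<in> T \<Longrightarrow> y \<in> T \<Longrightarrow> x + y \<in> T"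
    using assms unfolding f2_dim_subspace_def f2_subspace_def by auto
  have "card (T - {0}) = 3"
    using T by (simp add: card_Diff_singleton)
  then obtain a where a: "a \<in> T" "a \<noteq> 0"
    by (metis DiffE card_eq_0_iff ex_in_conv finite_Diff insertI1 zero_neq_numeral)
  \<comment> \<open>Avoiding \<open>-a\<close> makes \<open>a + b \<noteq> 0\<close> without appealing to characteristic 2.\<close>
  have "\<not> T \<subseteq> {0, a, -a}"
  proof
    assume "T \<subseteq> {0, a, -a}"
    then have "card T \<le> card {0, a, -a}"
      by (rule card_mono[rotated]) simp
    also have "\<dots> \<le> 3"
      by (intro card_insert_le_m1) simp_all
    finally show False
      using T(2) by simp
  qed
  then obtain b where b: "b \<in> T" "b \<noteq> 0" "b \<noteq> a" "b \<noteq> -a"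
    by blast
  have "a + b \<noteq> 0"
    using b(4) by (metis add.commute eq_neg_iff_add_eq_0)
  then have "card {0, a, b, a + b} = 4"
    using a(2) b(2,3) by simp
  moreover have "{0, a, b, a + b} \<subseteq> T"
    using T a b by auto
  ultimately have "T = {0, a, b, a + b}"
    using T by (metis card_subset_eq)
  with a b that show ?thesis
    by blast
qed

definition frobenius_block :: "'a::field \<Rightarrow> nat \<Rightarrow> 'a set \<Rightarrow> 'a set" where
  "frobenius_block c k X = (\<lambda>x. c * x ^ 2 ^ k) ` X"

locale primitive_binary_field =
  fixes n :: nat and \<alpha> :: "'a::{field,finite}"
  assumes card_UNIV: "card (UNIV :: 'a set) = 2 ^ n"
    and primitive: "primitive_elem \<alpha>"
    and two_le_n: "2 \<le> n"
begin

lemma n_pos: "0 < n"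
  using two_le_n by simp

lemma CHAR_eq_2: "CHAR('a) = 2"
proof -
  have "(\<Sum>x\<in>UNIV. x + 1) = (\<Sum>x\<in>UNIV. x :: 'a)"
    by (rule sum.reindex_bij_witness[of _ "\<lambda>x. x - 1" "\<lambda>x. x + 1"]) auto
  then have "of_nat (card (UNIV :: 'a set)) = (0 :: 'a)"
    by (simp add: sum.distrib)
  then have "of_nat 2 = (0 :: 'a)"
    using card_UNIV by simp
  then have "CHAR('a) dvd 2"
    by (simp only: of_nat_eq_0_iff_char_dvd)
  then show ?thesis
    using prime_nat_iff[of 2] CHAR_not_1 by auto
qed

lemma frobenius_add: "(x + y :: 'a) ^ 2 ^ k = x ^ 2 ^ k + y ^ 2 ^ k"
  by (rule freshmans_dream') (simp_all add: CHAR_eq_2)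

lemma frobenius_inj:
  assumes "(x :: 'a) ^ 2 ^ k = y ^ 2 ^ k"
  shows "x = y"
proof -
  have "(x - y) ^ 2 ^ k + y ^ 2 ^ k = y ^ 2 ^ k"
    using assms frobenius_add[of "x - y" y] by simp
  then show ?thesis
    by simp
qed

lemma f2_dim_subspace_frobenius_block:
  fixes c :: 'a
  assumes "f2_dim_subspace m X" and "c \<noteq> 0"
  shows "f2_dim_subspace m (frobenius_block c k X)"
  unfolding frobenius_block_def
proof (rule f2_dim_subspace_image[OF assms(1)])
  show "inj_on (\<lambda>x. c * x ^ 2 ^ k) X"
  proof (rule inj_onI)
    fix x y assume "c * x ^ 2 ^ k = c * y ^ 2 ^ k"
    then have "x ^ 2 ^ k = y ^ 2 ^ k"
      using assms(2) by simp
    then show "x = y"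
      by (rule frobenius_inj)
  qed
qed (simp_all add: frobenius_add distrib_left)

lemma power_card_minus_one:
  assumes "(x :: 'a) \<noteq> 0"
  shows "x ^ (2 ^ n - 1) = 1"
proof -
  have "(\<Prod>y\<in>UNIV - {0}. x * y) = (\<Prod>y\<in>UNIV - {0}. y)"
    by (rule prod.reindex_bij_witness[of _ "\<lambda>y. y / x" "\<lambda>y. x * y"]) (use assms in auto)
  then have "x ^ card (UNIV - {0 :: 'a}) = 1"
    by (simp add: prod.distrib)
  then show ?thesis
    using card_UNIV by (simp add: card_Diff_singleton)
qed

lemma alpha_nonzero: "\<alpha> \<noteq> 0"
proof
  assume "\<alpha> = 0"
  have "x \<in> {0, 1}" for x :: 'a
    using primitive \<open>\<alpha> = 0\<close> unfolding primitive_elem_def by (metis insertCI power_0_left)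
  then have "UNIV = {0, 1 :: 'a}"
    by blast
  then have "card (UNIV :: 'a set) = card {0, 1 :: 'a}"
    by (rule arg_cong)
  also have "\<dots> = 2"
    by simp
  moreover have "(2::nat) ^ 2 \<le> 2 ^ n"
    using two_le_n by (rule power_increasing) simp
  ultimately show False
    using card_UNIV by simp
qed

lemma alpha_pow_mod: "\<alpha> ^ (i mod (2 ^ n - 1)) = \<alpha> ^ i"
proof -
  have "\<alpha> ^ i = (\<alpha> ^ (2 ^ n - 1)) ^ (i div (2 ^ n - 1)) * \<alpha> ^ (i mod (2 ^ n - 1))"
    by (simp only: power_mult [symmetric] power_add [symmetric] mult_div_mod_eq)
  then show ?thesis
    using power_card_minus_one[OF alpha_nonzero] by simp
qed

lemma mersenne_pos: "(0::nat) < 2 ^ n - 1"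
  using one_less_power[of "2::nat" n] n_pos by simp

lemma alpha_pow_image: "(\<lambda>i. \<alpha> ^ i) ` {..<2 ^ n - 1 :: nat} = UNIV - {0}"
proof (intro antisym subsetI)
  fix x :: 'a assume "x \<in> UNIV - {0}"
  then obtain i where "x = \<alpha> ^ i"
    using primitive unfolding primitive_elem_def by blast
  then have "x = \<alpha> ^ (i mod (2 ^ n - 1))"
    by (simp only: alpha_pow_mod)
  then show "x \<in> (\<lambda>i. \<alpha> ^ i) ` {..<2 ^ n - 1 :: nat}"
    using mersenne_pos by auto
qed (use alpha_nonzero in auto)

lemma inj_on_alpha_pow: "inj_on (\<lambda>i. \<alpha> ^ i) {..<2 ^ n - 1 :: nat}"
proof (rule eq_card_imp_inj_on)
  show "card ((\<lambda>i. \<alpha> ^ i) ` {..<2 ^ n - 1 :: nat}) = card {..<2 ^ n - 1 :: nat}"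
    unfolding alpha_pow_image using card_UNIV by (simp add: card_Diff_singleton)
qed simp

lemma alpha_pow_eq_iff: "\<alpha> ^ i = \<alpha> ^ j \<longleftrightarrow> [i = j] (mod 2 ^ n - 1)"
proof -
  have "\<alpha> ^ i = \<alpha> ^ j \<longleftrightarrow> \<alpha> ^ (i mod (2 ^ n - 1)) = \<alpha> ^ (j mod (2 ^ n - 1))"
    by (simp only: alpha_pow_mod)
  also have "\<dots> \<longleftrightarrow> i mod (2 ^ n - 1) = j mod (2 ^ n - 1)"
    using inj_on_alpha_pow mersenne_pos by (auto dest: inj_onD)
  finally show ?thesis
    by (simp only: cong_def)
qed

definition dlog :: "'a \<Rightarrow> nat" where
  "dlog = inv_into {..<2 ^ n - 1} (\<lambda>i. \<alpha> ^ i)"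

lemma nonzero_in_alpha_pow_image: "z \<noteq> 0 \<Longrightarrow> z \<in> (\<lambda>i. \<alpha> ^ i) ` {..<2 ^ n - 1 :: nat}"
  unfolding alpha_pow_image by simp

lemma dlog_less: "z \<noteq> 0 \<Longrightarrow> dlog z < 2 ^ n - 1"
  unfolding dlog_def using inv_into_into[OF nonzero_in_alpha_pow_image] by simp

lemma alpha_pow_dlog: "z \<noteq> 0 \<Longrightarrow> \<alpha> ^ dlog z = z"
  unfolding dlog_def by (rule f_inv_into_f[OF nonzero_in_alpha_pow_image])

lemma dlog_alpha_pow: "i < 2 ^ n - 1 \<Longrightarrow> dlog (\<alpha> ^ i) = i"
  unfolding dlog_def using inv_into_f_f[OF inj_on_alpha_pow] by simp

lemma dlog_eq_0_iff: "z \<noteq> 0 \<Longrightarrow> dlog z = 0 \<longleftrightarrow> z = 1"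
  by (metis alpha_pow_dlog dlog_alpha_pow mersenne_pos power_0)

lemma mersenne_pos_int: "(0::int) < 2 ^ n - 1"
  using one_less_power[of "2::int" n] n_pos by simp

lemma exponent_difference_less: "nat ((int r - int s) mod (2 ^ n - 1)) < 2 ^ n - 1"
proof -
  have "(int r - int s) mod (2 ^ n - 1) < 2 ^ n - 1"
    using mersenne_pos_int by (rule pos_mod_bound)
  moreover have "0 \<le> (int r - int s) mod (2 ^ n - 1)"
    using mersenne_pos_int by (rule pos_mod_sign)
  ultimately show ?thesis
    by (simp add: nat_less_iff of_nat_diff)
qed

lemma alpha_pow_exponent_difference:
  "\<alpha> ^ nat ((int r - int s) mod (2 ^ n - 1)) = \<alpha> ^ r / \<alpha> ^ s"
proof -
  define d where "d = nat ((int r - int s) mod (2 ^ n - 1))"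
  have "int (2 ^ n - 1) = 2 ^ n - 1"
    using mersenne_pos by (simp add: of_nat_diff)
  moreover have "0 \<le> (int r - int s) mod (2 ^ n - 1)"
    using mersenne_pos_int by (rule pos_mod_sign)
  ultimately have "[int d = int r - int s] (mod int (2 ^ n - 1))"
    by (simp add: d_def cong_def)
  then have "[int (d + s) = int r] (mod int (2 ^ n - 1))"
    by (metis cong_add_rcancel diff_add_cancel of_nat_add)
  then have "\<alpha> ^ (d + s) = \<alpha> ^ r"
    by (simp only: alpha_pow_eq_iff cong_int_iff)
  then show ?thesis
    using alpha_nonzero by (simp add: d_def power_add field_simps)
qed

definition log_coset :: "'a \<Rightarrow> nat" where
  "log_coset z = coset_rep n (dlog z)"

lemma log_coset_frobenius:
  assumes "z \<noteq> 0"
  shows "log_coset (z ^ 2 ^ k) = log_coset z"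
proof -
  have "\<alpha> ^ dlog (z ^ 2 ^ k) = \<alpha> ^ (dlog z * 2 ^ k)"
    using assms by (simp add: alpha_pow_dlog power_mult)
  then have "cyc_coset n (dlog (z ^ 2 ^ k)) = cyc_coset n (dlog z * 2 ^ k)"
    by (intro cyc_coset_cong) (simp only: alpha_pow_eq_iff)
  then show ?thesis
    unfolding log_coset_def using coset_rep_eq_iff cyc_coset_mult_pow2 n_pos by simp
qed

lemma frobenius_of_mem_cyc_coset:
  fixes z w :: 'a
  assumes "z \<noteq> 0" and "w \<noteq> 0" and "dlog z \<in> cyc_coset n (dlog w)"
  obtains k where "k < n" and "z = w ^ 2 ^ k"
proof -
  obtain k where k: "k \<le> n - 1" "dlog z = dlog w * 2 ^ k mod (2 ^ n - 1)"
    using assms(3) unfolding cyc_coset_def by blast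
  then have "\<alpha> ^ dlog z = \<alpha> ^ (dlog w * 2 ^ k)"
    by (simp only: alpha_pow_mod)
  then have "z = w ^ 2 ^ k"
    using assms(1,2) by (simp add: alpha_pow_dlog power_mult)
  moreover have "k < n"
    using k(1) n_pos by linarith
  ultimately show ?thesis
    using that by blast
qed

lemma dlog_not_dvd:
  assumes "z \<noteq> 0" and "z \<noteq> 1"
  shows "\<not> (2 ^ n - 1) dvd dlog z"
proof (rule nat_dvd_not_less)
  show "0 < dlog z"
    using assms dlog_eq_0_iff[OF assms(1)] by simp
  show "dlog z < 2 ^ n - 1"
    using assms(1) by (rule dlog_less)
qed

lemma log_coset_is_rep:
  assumes "z \<noteq> 0" and "z \<noteq> 1"
  shows "coset_rep n (log_coset z) = log_coset z \<and> \<not> (2 ^ n - 1) dvd log_coset z"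
proof
  show "coset_rep n (log_coset z) = log_coset z"
    unfolding log_coset_def using n_pos by (rule coset_rep_coset_rep)
  have "log_coset z \<in> {1..<2 ^ n - 1}"
    unfolding log_coset_def
    using coset_rep_mem cyc_coset_subset_units[OF n_pos dlog_not_dvd[OF assms]] by blast
  then show "\<not> (2 ^ n - 1) dvd log_coset z"
    by (auto intro: nat_dvd_not_less)
qed

lemma frobenius_power_eq_imp_eq:
  fixes z :: 'a
  assumes "prime n" and "z \<noteq> 0" and "z \<noteq> 1" and "k1 < n" and "k2 < n"
    and "z ^ 2 ^ k1 = z ^ 2 ^ k2"
  shows "k1 = k2"
proof (rule mult_pow2_cong_imp_eq[OF assms(1) _ assms(4,5)])
  show "\<not> (2 ^ n - 1) dvd dlog z"
    using assms(2,3) by (rule dlog_not_dvd)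
  have "\<alpha> ^ (dlog z * 2 ^ k1) = \<alpha> ^ (dlog z * 2 ^ k2)"
    using assms(2,6) by (simp add: power_mult alpha_pow_dlog)
  then show "[dlog z * 2 ^ k1 = dlog z * 2 ^ k2] (mod 2 ^ n - 1)"
    by (simp only: alpha_pow_eq_iff)
qed

lemma exps_eq: "exps \<alpha> n X = dlog ` (X - {0})"
proof (intro antisym subsetI)
  fix i assume "i \<in> exps \<alpha> n X"
  then have "i < 2 ^ n - 1" "\<alpha> ^ i \<in> X"
    unfolding exps_def using mersenne_pos by auto
  then show "i \<in> dlog ` (X - {0})"
    using alpha_nonzero dlog_alpha_pow by (metis DiffI image_eqI power_not_zero singletonD)
next
  fix i assume "i \<in> dlog ` (X - {0})"
  then obtain z where "z \<in> X" "z \<noteq> 0" "i = dlog z"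
    by blast
  then show "i \<in> exps \<alpha> n X"
    unfolding exps_def using dlog_less[of z] alpha_pow_dlog[of z] by auto
qed

lemma coset_diff_set_eq:
  "coset_diff_set \<alpha> n X = (\<lambda>(x, y). log_coset (y / x)) ` distinct_pairs (X - {0})"
proof -
  have rep: "coset_rep n (nat ((int (dlog y) - int (dlog x)) mod (2 ^ n - 1))) = log_coset (y / x)"
    if "x \<noteq> 0" "y \<noteq> 0" for x y
    unfolding log_coset_def
    using that dlog_alpha_pow[OF exponent_difference_less]
      alpha_pow_exponent_difference[of "dlog y" "dlog x"]
    by (metis alpha_pow_dlog)
  have inj: "dlog x = dlog y \<longleftrightarrow> x = y" if "x \<noteq> 0" "y \<noteq> 0" for x y
    using that alpha_pow_dlog by metis
  show ?thesis
  proof (intro antisym subsetI)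
    fix c assume "c \<in> coset_diff_set \<alpha> n X"
    then obtain x y where "x \<in> X - {0}" "y \<in> X - {0}" "dlog y \<noteq> dlog x"
      and c: "c = coset_rep n (nat ((int (dlog y) - int (dlog x)) mod (2 ^ n - 1)))"
      unfolding coset_diff_set_def exps_eq by blast
    then show "c \<in> (\<lambda>(x, y). log_coset (y / x)) ` distinct_pairs (X - {0})"
      unfolding distinct_pairs_def using rep inj by (auto intro!: image_eqI[of _ _ "(x, y)"])
  next
    fix c assume "c \<in> (\<lambda>(x, y). log_coset (y / x)) ` distinct_pairs (X - {0})"
    then obtain x y where xy: "x \<in> X - {0}" "y \<in> X - {0}" "x \<noteq> y" and c: "c = log_coset (y / x)"
      unfolding distinct_pairs_def by auto
    then have "dlog y \<noteq> dlog x"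
      using inj by auto
    moreover have "c = coset_rep n (nat ((int (dlog y) - int (dlog x)) mod (2 ^ n - 1)))"
      using xy c rep by simp
    ultimately show "c \<in> coset_diff_set \<alpha> n X"
      unfolding coset_diff_set_def exps_eq using xy by blast
  qed
qed

end


section \<open>The Steiner structure\<close>

locale coset_complete_family = primitive_binary_field n \<alpha>
  for n :: nat and \<alpha> :: "'a::{field,finite}" +
  fixes F :: "'a set set"
  assumes prime_n: "prime n"
    and members: "\<forall>X\<in>F. f2_dim_subspace 3 X \<and> coset_complete \<alpha> n X"
    and pairwise_disjoint: "\<forall>X\<in>F. \<forall>Y\<in>F. X \<noteq> Y \<longrightarrow> disjoint_coset_complete \<alpha> n X Y"
    and card_F: "42 * n * card F = 2 ^ n - 2"
begin

lemma card_distinct_pairs_member: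
  assumes "X \<in> F"
  shows "card (distinct_pairs (X - {0})) = 42"
proof -
  have "finite X" "card X = 8" "0 \<in> X"
    using assms members unfolding f2_dim_subspace_def f2_subspace_def by auto
  then show ?thesis
    by (simp add: card_distinct_pairs card_Diff_singleton)
qed

lemma inj_on_log_coset_ratio:
  assumes "X \<in> F"
  shows "inj_on (\<lambda>(x, y). log_coset (y / x)) (distinct_pairs (X - {0}))"
proof (rule eq_card_imp_inj_on)
  show "finite (distinct_pairs (X - {0}))"
    using card_distinct_pairs_member[OF assms] card.infinite by fastforce
  show "card ((\<lambda>(x, y). log_coset (y / x)) ` distinct_pairs (X - {0})) = card (distinct_pairs (X - {0}))"
    using assms members card_distinct_pairs_member
    by (simp add: coset_complete_def flip: coset_diff_set_eq)
qed

lemma log_coset_ratio_eq_imp_eq: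
  assumes "X1 \<in> F" "(x1, y1) \<in> distinct_pairs (X1 - {0})"
    and "X2 \<in> F" "(x2, y2) \<in> distinct_pairs (X2 - {0})"
    and "log_coset (y1 / x1) = log_coset (y2 / x2)"
  shows "X1 = X2 \<and> x1 = x2 \<and> y1 = y2"
proof -
  have "log_coset (y1 / x1) \<in> coset_diff_set \<alpha> n X1 \<inter> coset_diff_set \<alpha> n X2"
    using assms unfolding coset_diff_set_eq by force
  then have "X1 = X2"
    using assms(1,3) pairwise_disjoint unfolding disjoint_coset_complete_def by blast
  with assms show ?thesis
    using inj_onD[OF inj_on_log_coset_ratio[OF assms(1)], of "(x1, y1)" "(x2, y2)"] by auto
qed

lemma log_coset_ratio_is_rep:
  assumes "(x, y) \<in> distinct_pairs (X - {0})"
  shows "coset_rep n (log_coset (y / x)) = log_coset (y / x) \<and> \<not> (2 ^ n - 1) dvd log_coset (y / x)"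
  using assms by (intro log_coset_is_rep) (auto simp: distinct_pairs_def)

lemma UN_cyc_cosets_eq:
  "(\<Union>c\<in>(\<Union>X\<in>F. coset_diff_set \<alpha> n X). cyc_coset n c) = {1..<2 ^ n - 1}"
    (is "(\<Union>c\<in>?R. _) = _")
proof -
  have reps: "coset_rep n c = c \<and> \<not> (2 ^ n - 1) dvd c" if "c \<in> ?R" for c
    using that log_coset_ratio_is_rep unfolding coset_diff_set_eq by auto
  have finite_cds: "finite (coset_diff_set \<alpha> n X)" for X
    unfolding coset_diff_set_eq distinct_pairs_def by simp
  have "card ?R = (\<Sum>X\<in>F. card (coset_diff_set \<alpha> n X))"
    using pairwise_disjoint finite_cds
    by (intro card_UN_disjoint) (auto simp: disjoint_coset_complete_def)
  also have "\<dots> = 42 * card F"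
    using members by (simp add: coset_complete_def)
  moreover have "finite ?R"
    using finite_cds by simp
  ultimately have "card (\<Union>c\<in>?R. cyc_coset n c) = n * (42 * card F)"
    using card_UN_cyc_coset[OF prime_n _ reps] by presburger
  also have "\<dots> = card {1..<2 ^ n - 1 :: nat}"
    using card_F by (simp add: mult.assoc)
  finally show ?thesis
    using cyc_coset_subset_units[OF n_pos] reps by (intro card_subset_eq) auto
qed

lemma ratio_as_frobenius_power:
  fixes z :: 'a
  assumes "z \<noteq> 0" and "z \<noteq> 1"
  obtains X x y k where "X \<in> F" "(x, y) \<in> distinct_pairs (X - {0})" "k < n" "z = (y / x) ^ 2 ^ k"
proof -
  have "dlog z \<in> {1..<2 ^ n - 1}"
    using assms dlog_less dlog_eq_0_iff[OF assms(1)] by (simp add: Suc_le_eq)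
  then obtain X c where X: "X \<in> F" "c \<in> coset_diff_set \<alpha> n X" "dlog z \<in> cyc_coset n c"
    unfolding UN_cyc_cosets_eq [symmetric] by blast
  then obtain x y where xy: "(x, y) \<in> distinct_pairs (X - {0})" "c = log_coset (y / x)"
    unfolding coset_diff_set_eq by auto
  then have "y / x \<noteq> 0"
    by (auto simp: distinct_pairs_def)
  moreover have "dlog z \<in> cyc_coset n (dlog (y / x))"
    using X(3) xy(2) cyc_coset_coset_rep[OF n_pos] by (simp add: log_coset_def)
  ultimately obtain k where "k < n" "z = (y / x) ^ 2 ^ k"
    using frobenius_of_mem_cyc_coset[OF assms(1)] by blast
  with X(1) xy(1) that show ?thesis
    by blast
qed

definition steiner_blocks :: "'a set set" where
  "steiner_blocks = {frobenius_block c k X | c k X. X \<in> F \<and> c \<noteq> 0 \<and> k < n}"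

lemma steiner_blocksE:
  assumes "B \<in> steiner_blocks"
  obtains c k X where "X \<in> F" "c \<noteq> 0" "k < n" "B = frobenius_block c k X"
  using assms unfolding steiner_blocks_def by blast

lemma f2_dim_subspace_steiner_block:
  assumes "B \<in> steiner_blocks"
  shows "f2_dim_subspace 3 B"
  using assms members f2_dim_subspace_frobenius_block by (auto elim: steiner_blocksE)

lemma pair_in_frobenius_block:
  assumes "a \<in> frobenius_block c k X" "b \<in> frobenius_block c k X"
    and "a \<noteq> 0" "b \<noteq> 0" "a \<noteq> b"
  obtains x y where "(x, y) \<in> distinct_pairs (X - {0})" "a = c * x ^ 2 ^ k" "b / a = (y / x) ^ 2 ^ k"
proof -
  obtain x y where xy: "x \<in> X" "y \<in> X" "a = c * x ^ 2 ^ k" "b = c * y ^ 2 ^ k"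
    using assms(1,2) unfolding frobenius_block_def by blast
  then have "x \<noteq> 0" "y \<noteq> 0" "c \<noteq> 0" "x \<noteq> y"
    using assms(3-5) by auto
  then have "(x, y) \<in> distinct_pairs (X - {0})" "b / a = (y / x) ^ 2 ^ k"
    using xy assms(3) by (auto simp: distinct_pairs_def power_divide)
  with xy(3) that show ?thesis
    by blast
qed

lemma steiner_block_through_pair:
  assumes "a \<noteq> 0" "b \<noteq> 0" "a \<noteq> b"
  shows "\<exists>B\<in>steiner_blocks. a \<in> B \<and> b \<in> B"
proof -
  have "b / a \<noteq> 0" "b / a \<noteq> 1"
    using assms by auto
  then obtain X x y k where X: "X \<in> F" "(x, y) \<in> distinct_pairs (X - {0})" "k < n"
    and ratio: "b / a = (y / x) ^ 2 ^ k"
    by (rule ratio_as_frobenius_power)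
  have x: "x \<in> X" "x \<noteq> 0" "y \<in> X"
    using X(2) by (auto simp: distinct_pairs_def)
  define c where "c = a / x ^ 2 ^ k"
  have "c \<noteq> 0" "a = c * x ^ 2 ^ k"
    using assms(1) x(2) by (simp_all add: c_def)
  moreover have "b = c * y ^ 2 ^ k"
    using ratio assms(1) x(2) by (simp add: c_def power_divide field_simps)
  ultimately have "a \<in> frobenius_block c k X" "b \<in> frobenius_block c k X"
    using x unfolding frobenius_block_def by auto
  with X \<open>c \<noteq> 0\<close> show ?thesis
    unfolding steiner_blocks_def by blast
qed

lemma steiner_block_through_pair_unique:
  assumes "a \<noteq> 0" "b \<noteq> 0" "a \<noteq> b"
    and "B1 \<in> steiner_blocks" "a \<in> B1" "b \<in> B1"
    and "B2 \<in> steiner_blocks" "a \<in> B2" "b \<in> B2"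
  shows "B1 = B2"
proof -
  obtain c1 k1 X1 where B1: "X1 \<in> F" "c1 \<noteq> 0" "k1 < n" "B1 = frobenius_block c1 k1 X1"
    using assms(4) by (rule steiner_blocksE)
  obtain c2 k2 X2 where B2: "X2 \<in> F" "c2 \<noteq> 0" "k2 < n" "B2 = frobenius_block c2 k2 X2"
    using assms(7) by (rule steiner_blocksE)
  obtain x1 y1 where xy1: "(x1, y1) \<in> distinct_pairs (X1 - {0})" "a = c1 * x1 ^ 2 ^ k1"
    "b / a = (y1 / x1) ^ 2 ^ k1"
    using pair_in_frobenius_block assms B1(4) by metis
  obtain x2 y2 where xy2: "(x2, y2) \<in> distinct_pairs (X2 - {0})" "a = c2 * x2 ^ 2 ^ k2"
    "b / a = (y2 / x2) ^ 2 ^ k2"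
    using pair_in_frobenius_block assms B2(4) by metis
  have nonzero: "y1 / x1 \<noteq> 0" "y1 / x1 \<noteq> 1" "y2 / x2 \<noteq> 0"
    using xy1(1) xy2(1) by (auto simp: distinct_pairs_def)
  have "log_coset (y1 / x1) = log_coset (y2 / x2)"
    using xy1(3) xy2(3) log_coset_frobenius nonzero by metis
  then have same: "X1 = X2" "x1 = x2" "y1 = y2"
    using log_coset_ratio_eq_imp_eq B1(1) B2(1) xy1(1) xy2(1) by blast+
  then have "k1 = k2"
    using frobenius_power_eq_imp_eq[OF prime_n nonzero(1,2) B1(3) B2(3)] xy1(3) xy2(3) by simp
  moreover have "c1 = c2"
    using xy1(2) xy2(2) xy1(1) same \<open>k1 = k2\<close> by (auto simp: distinct_pairs_def)
  ultimately show ?thesis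
    using B1(4) B2(4) same by simp
qed

lemma steiner_structure_steiner_blocks: "steiner_structure 2 3 steiner_blocks"
  unfolding steiner_structure_def
proof (intro conjI ballI allI impI)
  fix T :: "'a set" assume "f2_dim_subspace 2 T"
  then obtain a b where ab: "a \<noteq> 0" "b \<noteq> 0" "a \<noteq> b" and T: "T = {0, a, b, a + b}"
    by (rule f2_dim_subspace_2_eq)
  have contains: "T \<subseteq> B \<longleftrightarrow> a \<in> B \<and> b \<in> B" if "B \<in> steiner_blocks" for B
    using f2_dim_subspace_steiner_block[OF that] unfolding T f2_dim_subspace_def f2_subspace_def
    by auto
  show "\<exists>!B. B \<in> steiner_blocks \<and> T \<subseteq> B"
    using steiner_block_through_pair[OF ab] steiner_block_through_pair_unique[OF ab] contains
    by metis
qed (rule f2_dim_subspace_steiner_block)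

end

theorem theorem2:
  fixes n :: nat and \<alpha> :: "'a::{field,finite}"
  assumes "prime n" and "n mod 6 = 1"
    and "card (UNIV :: 'a set) = 2 ^ n"
    and "primitive_elem \<alpha>"
    and "\<exists>F. (\<forall>X\<in>F. f2_dim_subspace 3 X \<and> coset_complete \<alpha> n X)
             \<and> (\<forall>X\<in>F. \<forall>Y\<in>F. X \<noteq> Y \<longrightarrow> disjoint_coset_complete \<alpha> n X Y)
             \<and> 42 * n * card F = 2 ^ n - 2"
  shows "\<exists>S. steiner_structure 2 3 (S :: 'a set set)"
proof -
  obtain F where "\<forall>X\<in>F. f2_dim_subspace 3 X \<and> coset_complete \<alpha> n X"
    "\<forall>X\<in>F. \<forall>Y\<in>F. X \<noteq> Y \<longrightarrow> disjoint_coset_complete \<alpha> n X Y"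
    "42 * n * card F = 2 ^ n - 2"
    using assms(5) by blast
  then interpret coset_complete_family n \<alpha> F
    using assms(1,3,4) prime_ge_2_nat by unfold_locales auto
  show ?thesis
    using steiner_structure_steiner_blocks by blast
qed

end
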